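(* For any LP seed $\Sigma=(\mathbf{x},\mathbf{F})$ of rank $n$, $$\mathcal{U}(\Sigma)=\bigcap_{j=1}^n R[x_1^{\pm1},\dots,x_{j-1}^{\pm1},x_j,x'_j,x_{j+1}^{\pm1},\dots,x_n^{\pm1}].$$
   Context: $R$ is a unique factorization domain containing $\mathbb{Z}$ and $\mathcal{F}$ is the field of rational functions in $n$ variables over $\mathrm{Frac}(R)$. An LP seed of rank $n$ is a pair $(\mathbf{x},\mathbf{F})$ where $\mathbf{x}=\{x_1,\dots,x_n\}$ is a transcendence basis of $\mathcal{F}$ over $\mathrm{Frac}(R)$ and $\mathbf{F}=\{F_1,\dots,F_n\}$ are irreducible polynomials in $R[x_1,\dots,x_n]$ with $x_j\nmid F_i$ for all $i,j$ and $F_i$ not involving $x_i$. The exchange Laurent polynomial is $\hat F_j=F_j/\prod_{k\neq j}x_k^{a_k}$, with $a_k\in\mathbb{Z}_{\ge0}$ maximal such that $F_k^{a_k}$ divides $F_j|_{x_k\leftarrow F_k/x'_k}$ in $R[x_1,\dots,x_{k-1},(x'_k)^{-1},x_{k+1},\dots,x_n]$; $\hat F_j$ is a Laurent polynomial in the $x_i$, $i\ne j$. Set $x'_j=\hat F_j/x_j\in\mathcal{F}$ and let $\mathbf{x}_j=(\mathbf{x}\setminus\{x_j\})\cup\{x'_j\}$. The upper bound is $\mathcal{U}(\Sigma)=R[\mathbf{x}^{\pm1}]\cap R[\mathbf{x}_1^{\pm1}]\cap\dots\cap R[\mathbf{x}_n^{\pm1}]\subseteq\mathcal{F}$, where $R[\mathbf{z}^{\pm1}]$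 is the ring of Laurent polynomials over $R$ in the elements of $\mathbf{z}$. *)

theory Defs
  imports "HOL-Library.Poly_Mapping" "HOL-Computational_Algebra.Computational_Algebra"
begin

(* Multivariate polynomials over 'r in the variables t_0, t_1, t_2, ...:
   monomials are finitely supported exponent vectors nat \<Rightarrow>\<^sub>0 nat. *)
type_synonym 'r mpoly = "(nat \<Rightarrow>\<^sub>0 nat) \<Rightarrow>\<^sub>0 'r"

type_synonym 'r lpoly = "(nat \<Rightarrow>\<^sub>0 int) \<Rightarrow>\<^sub>0 'r"

(* The field of rational functions in n variables over Frac(R), realised as the
   fraction field of the polynomial ring R[t_1,...,t_n] (variables with index in {1..n}
   are the relevant ones; the ambient field is Frac(R[t_0,t_1,...]), which contains
   Frac(R[t_1..t_n]) as a subfield, see the carrier RatFun below). *)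
type_synonym 'r ratfun = "'r mpoly fract"

definition constF :: "'r::idom \<Rightarrow> 'r ratfun" where
  "constF c = Fract (Poly_Mapping.single 0 c) 1"

definition varF :: "nat \<Rightarrow> 'r::idom ratfun" where
  "varF i = Fract (Poly_Mapping.single (Poly_Mapping.single i 1) 1) 1"

definition vars :: "(('v \<Rightarrow>\<^sub>0 'e::zero) \<Rightarrow>\<^sub>0 'r::zero) \<Rightarrow> 'v set" where
  "vars p = (\<Union>m\<in>Poly_Mapping.keys p. Poly_Mapping.keys m)"

definition evalP :: "(nat \<Rightarrow> 'r::idom ratfun) \<Rightarrow> 'r mpoly \<Rightarrow> 'r ratfun" where
  "evalP z p = (\<Sum>m\<in>Poly_Mapping.keys p. constF (Poly_Mapping.lookup p m) * (\<Prod>i\<in>Poly_Mapping.keys m. z i ^ Poly_Mapping.lookup m i))"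

definition evalL :: "(nat \<Rightarrow> 'r::idom ratfun) \<Rightarrow> 'r lpoly \<Rightarrow> 'r ratfun" where
  "evalL z p = (\<Sum>m\<in>Poly_Mapping.keys p. constF (Poly_Mapping.lookup p m) * (\<Prod>i\<in>Poly_Mapping.keys m. z i powi Poly_Mapping.lookup m i))"

definition RatFun :: "nat \<Rightarrow> 'r::idom ratfun set" where
  "RatFun n = {evalP varF p / evalP varF q | p q. vars p \<subseteq> {1..n} \<and> vars q \<subseteq> {1..n} \<and> q \<noteq> 0}"

definition SubField :: "(nat \<Rightarrow> 'r::idom ratfun) \<Rightarrow> nat \<Rightarrow> 'r ratfun set" where
  "SubField z n = {evalP z p / evalP z q | p q. vars p \<subseteq> {1..n} \<and> vars q \<subseteq> {1..n} \<and> evalP z q \<noteq> 0}"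

definition alg_indep :: "(nat \<Rightarrow> 'r::idom ratfun) \<Rightarrow> nat \<Rightarrow> bool" where
  "alg_indep z n \<longleftrightarrow> (\<forall>p. vars p \<subseteq> {1..n} \<longrightarrow> evalP z p = 0 \<longrightarrow> p = 0)"

definition algebraic_over :: "'a::field set \<Rightarrow> 'a \<Rightarrow> bool" where
  "algebraic_over K f \<longleftrightarrow> (\<exists>q::'a poly. q \<noteq> 0 \<and> (\<forall>i. coeff q i \<in> K) \<and> poly q f = 0)"

definition transc_basis :: "(nat \<Rightarrow> 'r::idom ratfun) \<Rightarrow> nat \<Rightarrow> bool" where
  "transc_basis z n \<longleftrightarrow> (\<forall>i\<in>{1..n}. z i \<in> RatFun n) \<and> alg_indep z n \<and>
     (\<forall>f\<in>RatFun n. algebraic_over (SubField z n) f)"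

definition toL :: "'r::comm_monoid_add mpoly \<Rightarrow> 'r lpoly" where
  "toL p = (\<Sum>m\<in>Poly_Mapping.keys p. Poly_Mapping.single (Poly_Mapping.map int m) (Poly_Mapping.lookup p m))"

definition monoL :: "(nat \<Rightarrow>\<^sub>0 int) \<Rightarrow> 'r::comm_ring_1 lpoly" where
  "monoL e = Poly_Mapping.single e 1"

(* F_j |_{x_k <- F_k / y}, where the formal variable y (= x'_k) is the variable of index 0 *)
definition substL :: "'r::comm_ring_1 mpoly \<Rightarrow> nat \<Rightarrow> 'r mpoly \<Rightarrow> 'r lpoly" where
  "substL Fj k Fk = (\<Sum>m\<in>Poly_Mapping.keys Fj.
      Poly_Mapping.single (Poly_Mapping.map int (m - Poly_Mapping.single k (Poly_Mapping.lookup m k))) (Poly_Mapping.lookup Fj m)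
      * toL Fk ^ Poly_Mapping.lookup m k * monoL (Poly_Mapping.single 0 (- int (Poly_Mapping.lookup m k))))"

(* the ring R[x_1,..,x_{k-1},(x'_k)^{-1},x_{k+1},..,x_n] (formal, x'_k = variable 0) *)
definition ringA :: "nat \<Rightarrow> nat \<Rightarrow> 'r::comm_ring_1 lpoly set" where
  "ringA n k = {p. vars p \<subseteq> {0..n} - {k} \<and>
      (\<forall>m\<in>Poly_Mapping.keys p. (\<forall>i\<in>{1..n}. Poly_Mapping.lookup m i \<ge> 0) \<and> Poly_Mapping.lookup m 0 \<le> 0)}"

definition dvd_in :: "'a::times set \<Rightarrow> 'a \<Rightarrow> 'a \<Rightarrow> bool" where
  "dvd_in S a b \<longleftrightarrow> (\<exists>c\<in>S. b = a * c)"

definition expo :: "nat \<Rightarrow> (nat \<Rightarrow> 'r::comm_ring_1 mpoly) \<Rightarrow> nat \<Rightarrow> nat \<Rightarrow> nat" where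
  "expo n F j k = (GREATEST a. dvd_in (ringA n k) (toL (F k) ^ a) (substL (F j) k (F k)))"

definition hatF :: "nat \<Rightarrow> (nat \<Rightarrow> 'r::comm_ring_1 mpoly) \<Rightarrow> nat \<Rightarrow> 'r lpoly" where
  "hatF n F j = toL (F j) *
     monoL (\<Sum>k\<in>{1..n} - {j}. Poly_Mapping.single k (- int (expo n F j k)))"


definition LP_seed :: "nat \<Rightarrow> (nat \<Rightarrow> 'r::{factorial_semiring,idom} ratfun) \<Rightarrow> (nat \<Rightarrow> 'r mpoly) \<Rightarrow> bool" where
  "LP_seed n x F \<longleftrightarrow> transc_basis x n \<and>
     (\<forall>i\<in>{1..n}. vars (F i) \<subseteq> {1..n} - {i} \<and> irreducible (F i) \<and>
        (\<forall>j\<in>{1..n}. \<not> Poly_Mapping.single (Poly_Mapping.single j 1) 1 dvd F i))"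

definition xprime :: "nat \<Rightarrow> (nat \<Rightarrow> 'r::idom ratfun) \<Rightarrow> (nat \<Rightarrow> 'r mpoly) \<Rightarrow> nat \<Rightarrow> 'r ratfun" where
  "xprime n x F j = evalL x (hatF n F j) / x j"

definition LaurentRing :: "(nat \<Rightarrow> 'r::idom ratfun) \<Rightarrow> nat \<Rightarrow> 'r ratfun set" where
  "LaurentRing z n = {evalL z p | p. vars p \<subseteq> {1..n}}"

definition upper_bound :: "nat \<Rightarrow> (nat \<Rightarrow> 'r::idom ratfun) \<Rightarrow> (nat \<Rightarrow> 'r mpoly) \<Rightarrow> 'r ratfun set" where
  "upper_bound n x F = LaurentRing x n \<inter> (\<Inter>j\<in>{1..n}. LaurentRing (x(j := xprime n x F j)) n)"

(* R[x_1^{\<plusminus>1},..,x_{j-1}^{\<plusminus>1}, x_j, x'_j, x_{j+1}^{\<plusminus>1},..,x_n^{\<plusminus>1}]; x'_j plays variable 0 *)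
definition MixedRing :: "nat \<Rightarrow> (nat \<Rightarrow> 'r::idom ratfun) \<Rightarrow> (nat \<Rightarrow> 'r mpoly) \<Rightarrow> nat \<Rightarrow> 'r ratfun set" where
  "MixedRing n x F j = {evalL (x(0 := xprime n x F j)) p | p. vars p \<subseteq> {0..n} \<and>
      (\<forall>m\<in>Poly_Mapping.keys p. Poly_Mapping.lookup m j \<ge> 0 \<and> Poly_Mapping.lookup m 0 \<ge> 0)}"

end

(*
  Fix j and write x'_j = H / x_j, where H is the value of the exchange Laurent polynomial
  h = hatF_j; all that matters is that H is nonzero and h does not involve x_j. The mixed ring lies
  in R[x^{+-1}] because x'_j does, and in the Laurent ring of the cluster x_j := x'_j because
  x_j = H / x'_j does.

  Conversely, let y lie in both Laurent rings and expand it in the cluster x_j := x'_j. The terms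
  with nonnegative powers of x'_j already lie in the mixed ring. The remainder z lies in R[x^{+-1}],
  and H^N z is polynomial in x_j for large N, since 1 / x'_j = x_j / H. By algebraic independence
  the Laurent expansion of H^N z is h^N times that of z, and since h does not involve x_j, z has no
  negative powers of x_j either; so z lies in the mixed ring. Intersecting over j (n >= 1 absorbs
  the factor R[x^{+-1}] of the upper bound) gives the theorem.
*)
theory Submission
  imports Defs
begin

section \<open>Evaluation of Laurent polynomials\<close>

lemma lookup_map_int [simp]:
  "Poly_Mapping.lookup (Poly_Mapping.map int m) i = int (Poly_Mapping.lookup m i)"
  by (simp add: Poly_Mapping.map.rep_eq when_def)

lemma keys_map_int [simp]: "Poly_Mapping.keys (Poly_Mapping.map int m) = Poly_Mapping.keys m"
  by (simp add: set_eq_iff in_keys_iff)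

lemma keys_map_nat_subset: "Poly_Mapping.keys (Poly_Mapping.map nat m) \<subseteq> Poly_Mapping.keys m"
  by (auto simp: in_keys_iff Poly_Mapping.map.rep_eq)

lemma map_int_map_nat:
  assumes "\<And>i. 0 \<le> Poly_Mapping.lookup m i"
  shows "Poly_Mapping.map int (Poly_Mapping.map nat m) = m"
proof (rule poly_mapping_eqI)
  fix i
  show "Poly_Mapping.lookup (Poly_Mapping.map int (Poly_Mapping.map nat m)) i = Poly_Mapping.lookup m i"
    using assms[of i] by (simp add: Poly_Mapping.map.rep_eq when_def)
qed

lemma poly_mapping_sum_single:
  "p = (\<Sum>m\<in>Poly_Mapping.keys p. Poly_Mapping.single m (Poly_Mapping.lookup p m))"
  by (rule poly_mapping_eqI) (simp add: lookup_sum lookup_single when_def in_keys_iff sum.delta)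

lemma constF_0 [simp]: "constF 0 = (0 :: 'r::idom ratfun)"
  by (simp add: constF_def Zero_fract_def)

lemma constF_1 [simp]: "constF 1 = (1 :: 'r::idom ratfun)"
  by (simp add: constF_def One_fract_def)

lemma constF_add: "constF (a + b) = constF a + (constF b :: 'r::idom ratfun)"
  by (simp add: constF_def add_fract single_add)

lemma constF_mult: "constF (a * b) = constF a * (constF b :: 'r::idom ratfun)"
  by (simp add: constF_def mult_single)

lemma constF_uminus: "constF (- a) = - (constF a :: 'r::idom ratfun)"
  by (simp add: constF_def single_uminus)

definition evalMon :: "(nat \<Rightarrow> 'r::idom ratfun) \<Rightarrow> (nat \<Rightarrow>\<^sub>0 int) \<Rightarrow> 'r ratfun" where
  "evalMon z m = (\<Prod>i\<in>Poly_Mapping.keys m. z i powi Poly_Mapping.lookup m i)"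

lemma evalMon_superset:
  assumes "finite S" "Poly_Mapping.keys m \<subseteq> S"
  shows "evalMon z m = (\<Prod>i\<in>S. z i powi Poly_Mapping.lookup m i)"
  unfolding evalMon_def
  by (rule prod.mono_neutral_left) (use assms in \<open>auto simp: in_keys_iff\<close>)

lemma evalMon_0 [simp]: "evalMon z 0 = 1"
  by (simp add: evalMon_def)

lemma evalMon_single [simp]: "evalMon z (Poly_Mapping.single i k) = z i powi k"
  by (cases "k = 0") (auto simp: evalMon_def)

lemma evalMon_add:
  assumes "\<And>i. i \<in> Poly_Mapping.keys a \<union> Poly_Mapping.keys b \<Longrightarrow> z i \<noteq> 0"
  shows "evalMon z (a + b) = evalMon z a * evalMon z b"
proof -
  let ?S = "Poly_Mapping.keys a \<union> Poly_Mapping.keys b"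
  have "evalMon z (a + b) = (\<Prod>i\<in>?S. z i powi Poly_Mapping.lookup (a + b) i)"
    by (rule evalMon_superset) (use keys_add[of a b] in auto)
  also have "\<dots> = (\<Prod>i\<in>?S. z i powi Poly_Mapping.lookup a i * z i powi Poly_Mapping.lookup b i)"
    by (rule prod.cong) (auto simp: lookup_add power_int_add assms)
  also have "\<dots> = evalMon z a * evalMon z b"
    by (simp add: prod.distrib evalMon_superset[of ?S])
  finally show ?thesis .
qed

lemma evalMon_nonzero:
  "(\<And>i. i \<in> Poly_Mapping.keys m \<Longrightarrow> z i \<noteq> 0) \<Longrightarrow> evalMon z m \<noteq> 0"
  by (simp add: evalMon_def)

lemma evalL_eq_sum_evalMon:
  "evalL z p = (\<Sum>m\<in>Poly_Mapping.keys p. constF (Poly_Mapping.lookup p m) * evalMon z m)"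
  by (simp add: evalL_def evalMon_def)

lemma evalL_0 [simp]: "evalL z 0 = 0"
  by (simp add: evalL_def)

lemma evalL_single: "evalL z (Poly_Mapping.single m c) = constF c * evalMon z m"
  by (cases "c = 0") (simp_all add: evalL_eq_sum_evalMon)

lemma evalL_add: "evalL z (p + q) = evalL z p + evalL z q"
  unfolding evalL_eq_sum_evalMon
  by (rule setsum_keys_plus_distrib) (simp_all add: constF_add distrib_right)

lemma evalL_sum: "evalL z (\<Sum>i\<in>I. g i) = (\<Sum>i\<in>I. evalL z (g i))"
  by (induction I rule: infinite_finite_induct) (simp_all add: evalL_add)

lemma evalL_uminus: "evalL z (- p) = - evalL z p"
  by (simp add: evalL_def constF_uminus sum_negf)

lemma evalL_diff: "evalL z (p - q) = evalL z p - evalL z q"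
  using evalL_add[of z p "- q"] by (simp add: evalL_uminus)

lemma mult_eq_sum_single:
  "(p::'r::comm_ring_1 lpoly) * q = (\<Sum>a\<in>Poly_Mapping.keys p. \<Sum>b\<in>Poly_Mapping.keys q.
       Poly_Mapping.single (a + b) (Poly_Mapping.lookup p a * Poly_Mapping.lookup q b))"
  by (subst (1 2) poly_mapping_sum_single)
     (simp add: sum_distrib_left sum_distrib_right mult_single sum.swap[of _ "Poly_Mapping.keys q"])

lemma vars_iff: "i \<in> vars p \<longleftrightarrow> (\<exists>m\<in>Poly_Mapping.keys p. i \<in> Poly_Mapping.keys m)"
  by (simp add: vars_def)

lemma in_varsI: "m \<in> Poly_Mapping.keys p \<Longrightarrow> i \<in> Poly_Mapping.keys m \<Longrightarrow> i \<in> vars p"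
  by (auto simp: vars_iff)

lemma finite_vars: "finite (vars p)"
  by (simp add: vars_def)

lemma lookup_eq_0_if_notin_vars:
  "i \<notin> vars p \<Longrightarrow> m \<in> Poly_Mapping.keys p \<Longrightarrow> Poly_Mapping.lookup m i = 0"
  by (auto simp: vars_iff in_keys_iff)

lemma vars_add: "vars (p + q) \<subseteq> vars p \<union> vars q"
  using keys_add[of p q] by (auto simp: vars_def)

lemma vars_uminus [simp]: "vars (- p) = vars p"
  by (simp add: vars_def)

lemma vars_diff: "vars ((p::'r::ab_group_add lpoly) - q) \<subseteq> vars p \<union> vars q"
  using vars_add[of p "- q"] by simp

lemma vars_single: "vars (Poly_Mapping.single m c) \<subseteq> Poly_Mapping.keys m"
  by (auto simp: vars_def)

lemma vars_mult: "vars ((p::'r::comm_ring_1 lpoly) * q) \<subseteq> vars p \<union> vars q"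
proof
  fix i assume "i \<in> vars (p * q)"
  then obtain m where m: "m \<in> Poly_Mapping.keys (p * q)" "i \<in> Poly_Mapping.keys m"
    by (auto simp: vars_def)
  then obtain a b where "a \<in> Poly_Mapping.keys p" "b \<in> Poly_Mapping.keys q" "m = a + b"
    using keys_mult[of p q] by blast
  with m(2) keys_add[of a b] show "i \<in> vars p \<union> vars q"
    by (auto simp: vars_def)
qed

lemma vars_power: "vars ((p::'r::comm_ring_1 lpoly) ^ k) \<subseteq> vars p"
proof (induction k)
  case 0
  show ?case by (simp add: vars_def)
next
  case (Suc k)
  then show ?case using vars_mult[of p "p ^ k"] by auto
qed

lemma evalL_mult:
  assumes "\<And>i. i \<in> vars p \<union> vars q \<Longrightarrow> z i \<noteq> 0"
  shows "evalL z (p * q) = evalL z p * evalL z q"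
proof -
  have "evalL z (p * q) = (\<Sum>a\<in>Poly_Mapping.keys p. \<Sum>b\<in>Poly_Mapping.keys q.
      constF (Poly_Mapping.lookup p a) * evalMon z a * (constF (Poly_Mapping.lookup q b) * evalMon z b))"
    unfolding mult_eq_sum_single evalL_sum evalL_single constF_mult
  proof (intro sum.cong refl)
    fix a b assume "a \<in> Poly_Mapping.keys p" "b \<in> Poly_Mapping.keys q"
    then have "evalMon z (a + b) = evalMon z a * evalMon z b"
      by (intro evalMon_add assms) (auto simp: vars_iff)
    then show "constF (Poly_Mapping.lookup p a) * constF (Poly_Mapping.lookup q b) * evalMon z (a + b) =
        constF (Poly_Mapping.lookup p a) * evalMon z a * (constF (Poly_Mapping.lookup q b) * evalMon z b)"
      by (simp add: ac_simps)
  qed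
  also have "\<dots> = evalL z p * evalL z q"
    by (simp add: evalL_eq_sum_evalMon sum_product)
  finally show ?thesis .
qed

lemma evalL_power:
  assumes "\<And>i. i \<in> vars p \<Longrightarrow> z i \<noteq> 0"
  shows "evalL z ((p::'r::idom lpoly) ^ k) = evalL z p ^ k"
proof (induction k)
  case 0
  show ?case using evalL_single[of z 0 1] by simp
next
  case (Suc k)
  have "evalL z (p * p ^ k) = evalL z p * evalL z (p ^ k)"
    by (rule evalL_mult) (use assms vars_power[of p k] in blast)
  then show ?case using Suc by simp
qed

lemma evalL_cong:
  assumes "\<And>i. i \<in> vars p \<Longrightarrow> z i = z' i"
  shows "evalL z p = evalL z' p"
proof -
  have "evalMon z m = evalMon z' m" if "m \<in> Poly_Mapping.keys p" for m
    unfolding evalMon_def by (intro prod.cong refl arg_cong2[where f = power_int]) (meson assms that vars_iff)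
  then show ?thesis
    unfolding evalL_eq_sum_evalMon by (auto intro: sum.cong)
qed

lemma toL_0 [simp]: "toL 0 = 0"
  by (simp add: toL_def)

lemma toL_single: "toL (Poly_Mapping.single m c) = Poly_Mapping.single (Poly_Mapping.map int m) c"
  by (cases "c = 0") (simp_all add: toL_def)

lemma toL_add: "toL (p + q) = toL p + toL q"
  unfolding toL_def by (rule setsum_keys_plus_distrib) (simp_all add: single_add)

lemma toL_sum: "toL (\<Sum>i\<in>I. g i) = (\<Sum>i\<in>I. toL (g i))"
  by (induction I rule: infinite_finite_induct) (simp_all add: toL_add)

lemma evalL_toL: "evalL z (toL p) = evalP z p"
  by (simp add: toL_def evalL_sum evalL_single evalMon_def evalP_def)

lemma vars_toL: "vars (toL p) \<subseteq> vars p"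
proof -
  have "Poly_Mapping.keys (toL p) \<subseteq> Poly_Mapping.map int ` Poly_Mapping.keys p"
    using keys_sum[of "\<lambda>m. Poly_Mapping.single (Poly_Mapping.map int m) (Poly_Mapping.lookup p m)"]
    by (auto simp: toL_def split: if_splits)
  then show ?thesis
    unfolding vars_def by fastforce
qed

section \<open>Algebraic independence makes Laurent evaluation injective\<close>

lemma alg_indep_nonzero:
  fixes x :: "nat \<Rightarrow> 'r::idom ratfun"
  assumes "alg_indep x n" "i \<in> {1..n}"
  shows "x i \<noteq> 0"
proof
  let ?p = "Poly_Mapping.single (Poly_Mapping.single i 1) (1::'r) :: 'r mpoly"
  assume "x i = 0"
  then have "evalP x ?p = 0"
    by (simp add: evalP_def)
  moreover have "vars ?p \<subseteq> {1..n}"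
    using assms(2) by (simp add: vars_def)
  ultimately have "?p = 0"
    using assms(1) by (simp add: alg_indep_def)
  then show False
    by (metis lookup_single_eq zero_neq_one lookup_zero)
qed

lemma vars_subset_if_keys_map_nat:
  fixes Q :: "'r::zero mpoly" and p :: "'r lpoly"
  assumes "Poly_Mapping.keys Q \<subseteq> Poly_Mapping.map nat ` Poly_Mapping.keys p"
  shows "vars Q \<subseteq> vars p"
proof
  fix i assume "i \<in> vars Q"
  then obtain m' where m': "m' \<in> Poly_Mapping.keys Q" "i \<in> Poly_Mapping.keys m'"
    unfolding vars_iff by blast
  then obtain m where m: "m \<in> Poly_Mapping.keys p" "m' = Poly_Mapping.map nat m"
    using assms by blast
  with m'(2) have "i \<in> Poly_Mapping.keys m"
    using keys_map_nat_subset[of m] by blast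
  with m(1) show "i \<in> vars p"
    unfolding vars_iff by blast
qed

lemma toL_of_nonneg_exponents:
  assumes "\<And>m i. m \<in> Poly_Mapping.keys p \<Longrightarrow> 0 \<le> Poly_Mapping.lookup m i"
  shows "\<exists>Q. toL Q = p \<and> vars Q \<subseteq> vars p"
proof -
  define Q where "Q = (\<Sum>m\<in>Poly_Mapping.keys p.
      Poly_Mapping.single (Poly_Mapping.map nat m) (Poly_Mapping.lookup p m))"
  have "toL Q = (\<Sum>m\<in>Poly_Mapping.keys p. Poly_Mapping.single m (Poly_Mapping.lookup p m))"
    unfolding Q_def toL_sum toL_single by (intro sum.cong refl) (simp add: map_int_map_nat assms)
  also have "\<dots> = p"
    by (rule poly_mapping_sum_single[symmetric])
  finally have "toL Q = p" .
  have "Poly_Mapping.keys Q \<subseteq>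
      (\<Union>m\<in>Poly_Mapping.keys p. Poly_Mapping.keys (Poly_Mapping.single (Poly_Mapping.map nat m) (Poly_Mapping.lookup p m)))"
    unfolding Q_def by (rule keys_sum)
  also have "\<dots> \<subseteq> Poly_Mapping.map nat ` Poly_Mapping.keys p"
    by auto
  finally have "vars Q \<subseteq> vars p"
    by (rule vars_subset_if_keys_map_nat)
  with \<open>toL Q = p\<close> show ?thesis
    by blast
qed

lemma exists_shift_to_nonneg_exponents:
  fixes p :: "'r::zero lpoly"
  shows "\<exists>e. Poly_Mapping.keys e \<subseteq> vars p \<and>
     (\<forall>m\<in>Poly_Mapping.keys p. \<forall>i. 0 \<le> Poly_Mapping.lookup (m + e) i)"
proof -
  define e where "e = (\<Sum>i\<in>vars p. Poly_Mapping.single i (\<Sum>m\<in>Poly_Mapping.keys p. \<bar>Poly_Mapping.lookup m i\<bar>))"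
  have lookup_e: "Poly_Mapping.lookup e i =
      (if i \<in> vars p then \<Sum>m\<in>Poly_Mapping.keys p. \<bar>Poly_Mapping.lookup m i\<bar> else 0)" for i
    by (simp add: e_def lookup_sum lookup_single when_def finite_vars)
  have "Poly_Mapping.keys e \<subseteq> vars p"
    by (auto simp: in_keys_iff lookup_e split: if_splits)
  moreover have "0 \<le> Poly_Mapping.lookup (m + e) i" if m: "m \<in> Poly_Mapping.keys p" for m i
  proof (cases "i \<in> vars p")
    case True
    have "\<bar>Poly_Mapping.lookup m i\<bar> \<le> (\<Sum>m\<in>Poly_Mapping.keys p. \<bar>Poly_Mapping.lookup m i\<bar>)"
      by (rule member_le_sum) (use m in auto)
    then show ?thesis
      using True by (simp add: lookup_add lookup_e)
  next
    case False
    then show ?thesis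
      using m by (simp add: lookup_add lookup_e lookup_eq_0_if_notin_vars)
  qed
  ultimately show ?thesis
    by blast
qed

lemma alg_indep_evalL_eq_0:
  fixes x :: "nat \<Rightarrow> 'r::idom ratfun"
  assumes indep: "alg_indep x n" and vars_p: "vars p \<subseteq> {1..n}" and "evalL x p = 0"
  shows "p = 0"
proof -
  obtain e where e: "Poly_Mapping.keys e \<subseteq> vars p"
    and nonneg: "\<forall>m\<in>Poly_Mapping.keys p. \<forall>i. 0 \<le> Poly_Mapping.lookup (m + e) i"
    using exists_shift_to_nonneg_exponents[of p] by blast
  let ?q = "p * monoL e"
  have vars_e: "vars (monoL e :: 'r lpoly) \<subseteq> vars p"
    unfolding monoL_def using vars_single[of e "1::'r"] e by blast
  have "0 \<le> Poly_Mapping.lookup m i" if "m \<in> Poly_Mapping.keys ?q" for m i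
  proof -
    obtain a where "a \<in> Poly_Mapping.keys p" "m = a + e"
      using \<open>m \<in> Poly_Mapping.keys ?q\<close> keys_mult[of p "monoL e"] by (auto simp: monoL_def)
    then show ?thesis
      using nonneg by blast
  qed
  then obtain Q where Q: "toL Q = ?q" "vars Q \<subseteq> vars ?q"
    using toL_of_nonneg_exponents[of ?q] by blast
  have x_nonzero: "\<And>i. i \<in> vars p \<Longrightarrow> x i \<noteq> 0"
    using alg_indep_nonzero[OF indep] vars_p by blast
  have "evalP x Q = evalL x p * evalL x (monoL e)"
    unfolding evalL_toL[symmetric] Q(1) by (rule evalL_mult) (use x_nonzero vars_e in blast)
  moreover have "vars Q \<subseteq> {1..n}"
    using Q(2) vars_mult[of p "monoL e"] vars_e vars_p by blast
  ultimately have "Q = 0"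
    using indep \<open>evalL x p = 0\<close> by (simp add: alg_indep_def)
  then have "p * monoL e = 0"
    using Q(1) by simp
  moreover have "monoL e \<noteq> (0 :: 'r lpoly)"
    by (metis lookup_single_eq lookup_zero monoL_def zero_neq_one)
  ultimately show ?thesis
    by simp
qed

section \<open>Splitting a Laurent polynomial by the sign of an exponent\<close>

definition restrict_monomials :: "((nat \<Rightarrow>\<^sub>0 int) \<Rightarrow> bool) \<Rightarrow> 'r::zero lpoly \<Rightarrow> 'r lpoly" where
  "restrict_monomials P p = Poly_Mapping.mapp (\<lambda>m c. c when P m) p"

lemma lookup_restrict_monomials:
  "Poly_Mapping.lookup (restrict_monomials P p) m = (Poly_Mapping.lookup p m when P m)"
  by (auto simp: restrict_monomials_def lookup_mapp in_keys_iff when_def)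

lemma keys_restrict_monomials:
  "Poly_Mapping.keys (restrict_monomials P p) = {m \<in> Poly_Mapping.keys p. P m}"
  by (auto simp: in_keys_iff lookup_restrict_monomials)

lemma vars_restrict_monomials: "vars (restrict_monomials P p) \<subseteq> vars p"
  by (auto simp: vars_def keys_restrict_monomials)

lemma restrict_monomials_add:
  "restrict_monomials P (p + q) = restrict_monomials P p + restrict_monomials P (q :: 'r::monoid_add lpoly)"
  by (rule poly_mapping_eqI) (simp add: lookup_add lookup_restrict_monomials when_add_distrib)

lemma restrict_monomials_split:
  "restrict_monomials P p + restrict_monomials (\<lambda>m. \<not> P m) p = (p :: 'r::monoid_add lpoly)"
  by (rule poly_mapping_eqI) (simp add: lookup_add lookup_restrict_monomials when_def)

lemma restrict_monomials_eq_self: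
  "(\<And>m. m \<in> Poly_Mapping.keys p \<Longrightarrow> P m) \<Longrightarrow> restrict_monomials P p = p"
  by (rule poly_mapping_eqI) (auto simp: lookup_restrict_monomials in_keys_iff when_def)

lemma restrict_monomials_eq_0:
  "(\<And>m. m \<in> Poly_Mapping.keys p \<Longrightarrow> \<not> P m) \<Longrightarrow> restrict_monomials P p = 0"
  by (rule poly_mapping_eqI) (auto simp: lookup_restrict_monomials in_keys_iff when_def)

text \<open>Since \<open>g\<close> does not involve \<open>j\<close>, multiplication by \<open>g\<close> preserves the parts of \<open>w\<close>
  with negative and with nonnegative exponent of \<open>j\<close>.\<close>

lemma nonneg_exponent_cancel:
  fixes g w :: "'r::idom lpoly"
  assumes "g \<noteq> 0" "j \<notin> vars g"
    and "\<forall>m\<in>Poly_Mapping.keys (g * w). 0 \<le> Poly_Mapping.lookup m j"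
  shows "\<forall>m\<in>Poly_Mapping.keys w. 0 \<le> Poly_Mapping.lookup m j"
proof -
  let ?neg = "\<lambda>m. Poly_Mapping.lookup m j < (0::int)"
  define w_neg where "w_neg = restrict_monomials ?neg w"
  define w_nonneg where "w_nonneg = restrict_monomials (\<lambda>m. \<not> ?neg m) w"
  have exponent_j_of_product: "\<exists>b\<in>Poly_Mapping.keys u. Poly_Mapping.lookup m j = Poly_Mapping.lookup b j"
    if "m \<in> Poly_Mapping.keys (g * u)" for m u
    using that keys_mult[of g u] lookup_eq_0_if_notin_vars[OF assms(2)] by (fastforce simp: lookup_add)
  have "restrict_monomials ?neg (g * w_neg) = g * w_neg"
    by (rule restrict_monomials_eq_self)
       (use exponent_j_of_product in \<open>fastforce simp: w_neg_def keys_restrict_monomials\<close>)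
  moreover have "restrict_monomials ?neg (g * w_nonneg) = 0"
    by (rule restrict_monomials_eq_0)
       (use exponent_j_of_product in \<open>fastforce simp: w_nonneg_def keys_restrict_monomials\<close>)
  moreover have "g * w = g * w_neg + g * w_nonneg"
    unfolding w_neg_def w_nonneg_def by (simp add: restrict_monomials_split flip: distrib_left)
  moreover have "restrict_monomials ?neg (g * w) = 0"
    by (rule restrict_monomials_eq_0) (use assms(3) in force)
  ultimately have "w_neg = 0"
    using assms(1) by (simp add: restrict_monomials_add)
  show ?thesis
  proof (intro ballI leI notI)
    fix m assume "m \<in> Poly_Mapping.keys w" "?neg m"
    then have "Poly_Mapping.lookup w_neg m \<noteq> 0"
      by (simp add: w_neg_def lookup_restrict_monomials in_keys_iff)
    with \<open>w_neg = 0\<close> show False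
      by simp
  qed
qed

section \<open>Subalgebras of the function field\<close>

locale R_subalgebra =
  fixes T :: "'r::idom ratfun set"
  assumes constF_in: "constF c \<in> T"
    and add_in: "a \<in> T \<Longrightarrow> b \<in> T \<Longrightarrow> a + b \<in> T"
    and mult_in: "a \<in> T \<Longrightarrow> b \<in> T \<Longrightarrow> a * b \<in> T"
begin

lemma zero_in: "0 \<in> T"
  using constF_in[of 0] by simp

lemma one_in: "1 \<in> T"
  using constF_in[of 1] by simp

lemma diff_in:
  assumes "a \<in> T" "b \<in> T"
  shows "a - b \<in> T"
proof -
  have "a - b = a + constF (- 1) * b"
    by (simp add: constF_uminus)
  then show ?thesis
    using assms by (metis add_in mult_in constF_in)
qed

lemma sum_in: "(\<And>i. i \<in> I \<Longrightarrow> f i \<in> T) \<Longrightarrow> sum f I \<in> T"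
  by (induction I rule: infinite_finite_induct) (auto intro: zero_in add_in)

lemma prod_in: "(\<And>i. i \<in> I \<Longrightarrow> f i \<in> T) \<Longrightarrow> prod f I \<in> T"
  by (induction I rule: infinite_finite_induct) (auto intro: one_in mult_in)

lemma power_in: "a \<in> T \<Longrightarrow> a ^ k \<in> T"
  by (induction k) (auto intro: one_in mult_in)

lemma power_int_in: "a \<in> T \<Longrightarrow> 0 \<le> k \<Longrightarrow> a powi k \<in> T"
  by (metis power_in power_int_of_nat nonneg_int_cases)

lemma evalL_in:
  assumes "\<And>m i. m \<in> Poly_Mapping.keys p \<Longrightarrow> i \<in> Poly_Mapping.keys m \<Longrightarrow> z i powi Poly_Mapping.lookup m i \<in> T"
  shows "evalL z p \<in> T"
  unfolding evalL_def by (intro sum_in mult_in constF_in prod_in assms)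

text \<open>The localization \<open>T[1/H]\<close>, viewed inside the function field.\<close>

lemma localization:
  assumes "H \<in> T"
  shows "R_subalgebra {y. \<exists>N. H ^ N * y \<in> T}"
proof
  show "constF c \<in> {y. \<exists>N. H ^ N * y \<in> T}" for c
    using constF_in[of c] by (auto intro: exI[of _ 0])
  fix a b assume "a \<in> {y. \<exists>N. H ^ N * y \<in> T}" "b \<in> {y. \<exists>N. H ^ N * y \<in> T}"
  then obtain M N where a: "H ^ M * a \<in> T" and b: "H ^ N * b \<in> T"
    by blast
  have "H ^ (M + N) * (a + b) = H ^ N * (H ^ M * a) + H ^ M * (H ^ N * b)"
    by (simp add: power_add algebra_simps)
  then have "H ^ (M + N) * (a + b) \<in> T"
    using a b by (auto intro: add_in mult_in power_in assms)
  then show "a + b \<in> {y. \<exists>N. H ^ N * y \<in> T}"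
    by blast
  have "H ^ (M + N) * (a * b) = (H ^ M * a) * (H ^ N * b)"
    by (simp add: power_add algebra_simps)
  then have "H ^ (M + N) * (a * b) \<in> T"
    using mult_in[OF a b] by metis
  then show "a * b \<in> {y. \<exists>N. H ^ N * y \<in> T}"
    by blast
qed

lemma subset_localization: "T \<subseteq> {y. \<exists>N. H ^ N * y \<in> T}"
  by (auto intro: exI[of _ 0])

end

text \<open>All rings of the theorem are of this form; in the mixed ring the variable of index \<open>0\<close>
  stands for \<open>x'\<^sub>j\<close>.\<close>

definition monomial_span ::
    "(nat \<Rightarrow> 'r::idom ratfun) \<Rightarrow> nat set \<Rightarrow> ((nat \<Rightarrow>\<^sub>0 int) \<Rightarrow> bool) \<Rightarrow> 'r ratfun set" where
  "monomial_span z S P = {evalL z p | p. vars p \<subseteq> S \<and> (\<forall>m\<in>Poly_Mapping.keys p. P m)}"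

lemma evalL_in_monomial_span:
  "vars p \<subseteq> S \<Longrightarrow> (\<And>m. m \<in> Poly_Mapping.keys p \<Longrightarrow> P m) \<Longrightarrow> evalL z p \<in> monomial_span z S P"
  unfolding monomial_span_def by blast

lemma monomial_spanE:
  assumes "y \<in> monomial_span z S P"
  obtains p where "y = evalL z p" "vars p \<subseteq> S" "\<And>m. m \<in> Poly_Mapping.keys p \<Longrightarrow> P m"
  using assms unfolding monomial_span_def by blast

lemma R_subalgebra_monomial_span:
  assumes "P 0" "\<And>a b. P a \<Longrightarrow> P b \<Longrightarrow> P (a + b)" "\<And>i. i \<in> S \<Longrightarrow> z i \<noteq> 0"
  shows "R_subalgebra (monomial_span z S P)"
proof
  show "constF c \<in> monomial_span z S P" for c
  proof -
    have "evalL z (Poly_Mapping.single 0 c) \<in> monomial_span z S P"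
      by (rule evalL_in_monomial_span) (auto simp: vars_def assms(1) split: if_splits)
    then show ?thesis
      by (simp add: evalL_single)
  qed
  fix a b assume "a \<in> monomial_span z S P" "b \<in> monomial_span z S P"
  obtain p where p: "a = evalL z p" "vars p \<subseteq> S" "\<And>m. m \<in> Poly_Mapping.keys p \<Longrightarrow> P m"
    using \<open>a \<in> monomial_span z S P\<close> by (rule monomial_spanE) blast
  obtain q where q: "b = evalL z q" "vars q \<subseteq> S" "\<And>m. m \<in> Poly_Mapping.keys q \<Longrightarrow> P m"
    using \<open>b \<in> monomial_span z S P\<close> by (rule monomial_spanE) blast
  have "evalL z (p + q) \<in> monomial_span z S P"
  proof (rule evalL_in_monomial_span)
    show "vars (p + q) \<subseteq> S"
      using vars_add[of p q] p(2) q(2) by blast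
    show "P m" if "m \<in> Poly_Mapping.keys (p + q)" for m
      using that keys_add[of p q] p(3) q(3) by blast
  qed
  then show "a + b \<in> monomial_span z S P"
    by (simp add: p(1) q(1) evalL_add)
  have "evalL z (p * q) \<in> monomial_span z S P"
  proof (rule evalL_in_monomial_span)
    show "vars (p * q) \<subseteq> S"
      using vars_mult[of p q] p(2) q(2) by blast
    show "P m" if "m \<in> Poly_Mapping.keys (p * q)" for m
      using that keys_mult[of p q] p(3) q(3) assms(2) by blast
  qed
  moreover have "evalL z (p * q) = a * b"
    using p(1,2) q(1,2) assms(3) by (subst evalL_mult) auto
  ultimately show "a * b \<in> monomial_span z S P"
    by simp
qed

lemma power_int_in_monomial_span:
  assumes "P (Poly_Mapping.single i k)" "i \<in> S"
  shows "z i powi k \<in> monomial_span z S P"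
proof -
  have "evalL z (Poly_Mapping.single (Poly_Mapping.single i k) 1) \<in> monomial_span z S P"
    by (rule evalL_in_monomial_span) (use assms in \<open>auto simp: vars_def\<close>)
  then show ?thesis
    by (simp add: evalL_single)
qed

section \<open>A single exchange\<close>

locale exchange =
  fixes n j :: nat and x :: "nat \<Rightarrow> 'r::idom ratfun" and h :: "'r lpoly"
  assumes alg_indep: "alg_indep x n" and j: "j \<in> {1..n}"
    and vars_h: "vars h \<subseteq> {1..n} - {j}" and H_nonzero: "evalL x h \<noteq> 0"
begin

abbreviation H :: "'r ratfun" where
  "H \<equiv> evalL x h"

definition x' :: "'r ratfun" where
  "x' = H / x j"

abbreviation laurent :: "'r ratfun set" where
  "laurent \<equiv> monomial_span x {1..n} (\<lambda>_. True)"

abbreviation laurent' :: "'r ratfun set" where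
  "laurent' \<equiv> monomial_span (x(j := x')) {1..n} (\<lambda>_. True)"

abbreviation mixed :: "'r ratfun set" where
  "mixed \<equiv> monomial_span (x(0 := x')) {0..n}
     (\<lambda>m. 0 \<le> Poly_Mapping.lookup m j \<and> 0 \<le> Poly_Mapping.lookup m 0)"

abbreviation polynomial_in_x_j :: "'r ratfun set" where
  "polynomial_in_x_j \<equiv> monomial_span x {1..n} (\<lambda>m. 0 \<le> Poly_Mapping.lookup m j)"

lemma j_nonzero: "j \<noteq> 0"
  using j by simp

lemma x_nonzero: "i \<in> {1..n} \<Longrightarrow> x i \<noteq> 0"
  by (rule alg_indep_nonzero[OF alg_indep])

lemma x'_nonzero: "x' \<noteq> 0"
  using H_nonzero x_nonzero[OF j] by (simp add: x'_def)

lemma H_eq: "H = x' * x j"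
  using x_nonzero[OF j] by (simp add: x'_def)

sublocale laurent: R_subalgebra laurent
  by (rule R_subalgebra_monomial_span) (auto simp: x_nonzero)

sublocale laurent': R_subalgebra laurent'
  by (rule R_subalgebra_monomial_span) (auto simp: x_nonzero x'_nonzero)

sublocale mixed: R_subalgebra mixed
  by (rule R_subalgebra_monomial_span) (auto simp: lookup_add x_nonzero x'_nonzero)

sublocale polynomial_in_x_j: R_subalgebra polynomial_in_x_j
  by (rule R_subalgebra_monomial_span) (auto simp: lookup_add x_nonzero)

lemma H_in_laurent: "H \<in> laurent"
  using vars_h by (auto intro: evalL_in_monomial_span)

lemma H_in_laurent': "H \<in> laurent'"
proof -
  have "H = evalL (x(j := x')) h"
    by (rule evalL_cong) (use vars_h in auto)
  also have "\<dots> \<in> laurent'"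
    using vars_h by (auto intro: evalL_in_monomial_span)
  finally show ?thesis .
qed

lemma H_in_polynomial_in_x_j: "H \<in> polynomial_in_x_j"
proof (rule evalL_in_monomial_span)
  show "vars h \<subseteq> {1..n}"
    using vars_h by blast
  show "0 \<le> Poly_Mapping.lookup m j" if "m \<in> Poly_Mapping.keys h" for m
  proof -
    have "j \<notin> vars h"
      using vars_h by blast
    then show ?thesis
      using lookup_eq_0_if_notin_vars[OF _ that] by simp
  qed
qed

lemma x'_in_laurent: "x' \<in> laurent"
proof -
  have "x j powi - 1 \<in> laurent"
    by (rule power_int_in_monomial_span) (use j in auto)
  then have "H * x j powi - 1 \<in> laurent"
    by (rule laurent.mult_in[OF H_in_laurent])
  then show ?thesis
    by (simp add: x'_def power_int_minus divide_inverse)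
qed

lemma x_j_in_laurent': "x j \<in> laurent'"
proof -
  have "(x(j := x')) j powi - 1 \<in> laurent'"
    using j by (rule power_int_in_monomial_span[rotated]) simp
  then have "H * x' powi - 1 \<in> laurent'"
    using laurent'.mult_in[OF H_in_laurent'] by simp
  then show ?thesis
    using x'_nonzero by (simp add: H_eq power_int_minus field_simps)
qed

lemma x'_in_laurent': "x' \<in> laurent'"
  using power_int_in_monomial_span[of "\<lambda>_. True" j 1 "{1..n}" "x(j := x')"] j by simp

lemma mixed_subset_laurent: "mixed \<subseteq> laurent"
proof
  fix y assume "y \<in> mixed"
  then obtain p where y: "y = evalL (x(0 := x')) p" and vars_p: "vars p \<subseteq> {0..n}"
    and exps: "\<And>m. m \<in> Poly_Mapping.keys p \<Longrightarrow> 0 \<le> Poly_Mapping.lookup m j \<and> 0 \<le> Poly_Mapping.lookup m 0"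
    by (blast elim: monomial_spanE)
  show "y \<in> laurent"
    unfolding y
  proof (rule laurent.evalL_in)
    fix m i assume m: "m \<in> Poly_Mapping.keys p" and i: "i \<in> Poly_Mapping.keys m"
    show "(x(0 := x')) i powi Poly_Mapping.lookup m i \<in> laurent"
    proof (cases "i = 0")
      case True
      then show ?thesis
        using exps m laurent.power_int_in[OF x'_in_laurent] by simp
    next
      case False
      with vars_p in_varsI[OF m i] have "i \<in> {1..n}"
        by auto
      with False show ?thesis
        by (simp add: power_int_in_monomial_span)
    qed
  qed
qed

lemma mixed_subset_laurent': "mixed \<subseteq> laurent'"
proof
  fix y assume "y \<in> mixed"
  then obtain p where y: "y = evalL (x(0 := x')) p" and vars_p: "vars p \<subseteq> {0..n}"
    and exps: "\<And>m. m \<in> Poly_Mapping.keys p \<Longrightarrow> 0 \<le> Poly_Mapping.lookup m j \<and> 0 \<le> Poly_Mapping.lookup m 0"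
    by (blast elim: monomial_spanE)
  show "y \<in> laurent'"
    unfolding y
  proof (rule laurent'.evalL_in)
    fix m i assume m: "m \<in> Poly_Mapping.keys p" and i: "i \<in> Poly_Mapping.keys m"
    consider "i = 0" | "i = j" | "i \<in> {1..n} - {j}"
      using vars_p in_varsI[OF m i] by fastforce
    then show "(x(0 := x')) i powi Poly_Mapping.lookup m i \<in> laurent'"
    proof cases
      case 1
      then show ?thesis
        using exps m laurent'.power_int_in[OF x'_in_laurent'] by simp
    next
      case 2
      then show ?thesis
        using exps m j_nonzero laurent'.power_int_in[OF x_j_in_laurent'] by simp
    next
      case 3
      then have "(x(j := x')) i powi Poly_Mapping.lookup m i \<in> laurent'"
        by (intro power_int_in_monomial_span) auto
      with 3 show ?thesis
        by simp
    qed
  qed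
qed

lemma polynomial_in_x_j_subset_mixed: "polynomial_in_x_j \<subseteq> mixed"
proof
  fix y assume "y \<in> polynomial_in_x_j"
  then obtain p where y: "y = evalL x p" and vars_p: "vars p \<subseteq> {1..n}"
    and exps: "\<And>m. m \<in> Poly_Mapping.keys p \<Longrightarrow> 0 \<le> Poly_Mapping.lookup m j"
    by (blast elim: monomial_spanE)
  have "y = evalL (x(0 := x')) p"
    unfolding y by (rule evalL_cong) (use vars_p in auto)
  also have "\<dots> \<in> mixed"
  proof (rule evalL_in_monomial_span)
    show "vars p \<subseteq> {0..n}"
      using vars_p by auto
    have "0 \<notin> vars p"
      using vars_p by auto
    then show "0 \<le> Poly_Mapping.lookup m j \<and> 0 \<le> Poly_Mapping.lookup m 0"
      if "m \<in> Poly_Mapping.keys p" for m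
      using exps[OF that] lookup_eq_0_if_notin_vars[OF _ that] by simp
  qed
  finally show "y \<in> mixed" .
qed

lemma nonneg_exponents_in_mixed:
  assumes vars_q: "vars q \<subseteq> {1..n}" and exps: "\<And>m. m \<in> Poly_Mapping.keys q \<Longrightarrow> 0 \<le> Poly_Mapping.lookup m j"
  shows "evalL (x(j := x')) q \<in> mixed"
proof (rule mixed.evalL_in)
  fix m i assume m: "m \<in> Poly_Mapping.keys q" and i: "i \<in> Poly_Mapping.keys m"
  with vars_q in_varsI[OF m i] have i_range: "i \<in> {1..n}"
    by auto
  show "(x(j := x')) i powi Poly_Mapping.lookup m i \<in> mixed"
  proof (cases "i = j")
    case True
    have "(x(0 := x')) 0 powi 1 \<in> mixed"
      using j_nonzero by (intro power_int_in_monomial_span) (auto simp: lookup_one)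
    then show ?thesis
      using True exps[OF m] mixed.power_int_in by simp
  next
    case False
    then have "(x(0 := x')) i powi Poly_Mapping.lookup m i \<in> mixed"
      using i_range by (intro power_int_in_monomial_span) (auto simp: lookup_single)
    with False i_range show ?thesis
      by simp
  qed
qed

text \<open>Negative powers of \<open>x'\<close> become polynomials in \<open>x\<^sub>j\<close> after multiplication by a power
  of \<open>H\<close>, because \<open>H / x' = x\<^sub>j\<close>.\<close>

lemma nonpos_exponents_in_localization:
  assumes vars_q: "vars q \<subseteq> {1..n}" and exps: "\<And>m. m \<in> Poly_Mapping.keys q \<Longrightarrow> Poly_Mapping.lookup m j \<le> 0"
  shows "\<exists>N. H ^ N * evalL (x(j := x')) q \<in> polynomial_in_x_j"
proof -
  let ?loc = "{y. \<exists>N. H ^ N * y \<in> polynomial_in_x_j}"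
  interpret loc: R_subalgebra ?loc
    by (rule polynomial_in_x_j.localization[OF H_in_polynomial_in_x_j])
  have "H ^ 1 * inverse x' = x j powi 1"
    using x'_nonzero by (simp add: H_eq)
  also have "\<dots> \<in> polynomial_in_x_j"
    using j by (intro power_int_in_monomial_span) auto
  finally have inverse_x': "inverse x' \<in> ?loc"
    by blast
  have "evalL (x(j := x')) q \<in> ?loc"
  proof (rule loc.evalL_in)
    fix m i assume m: "m \<in> Poly_Mapping.keys q" and i: "i \<in> Poly_Mapping.keys m"
    show "(x(j := x')) i powi Poly_Mapping.lookup m i \<in> ?loc"
    proof (cases "i = j")
      case True
      have "x' powi Poly_Mapping.lookup m j = inverse x' powi (- Poly_Mapping.lookup m j)"
        by (simp add: power_int_minus power_int_inverse)
      then show ?thesis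
        using True exps[OF m] loc.power_int_in[OF inverse_x'] by simp
    next
      case False
      with vars_q in_varsI[OF m i] have "x i powi Poly_Mapping.lookup m i \<in> polynomial_in_x_j"
        by (intro power_int_in_monomial_span) (auto simp: lookup_single)
      with False show ?thesis
        using polynomial_in_x_j.subset_localization by auto
    qed
  qed
  then show ?thesis
    by simp
qed

text \<open>Here algebraic independence enters: \<open>H\<^sup>N y\<close> has a unique Laurent expansion, which is
  \<open>h\<^sup>N\<close> times that of \<open>y\<close>, and \<open>h\<close> does not involve \<open>x\<^sub>j\<close>.\<close>

lemma divide_out_H:
  assumes "y \<in> laurent" and "H ^ N * y \<in> polynomial_in_x_j"
  shows "y \<in> polynomial_in_x_j"
proof -
  obtain w where w: "y = evalL x w" "vars w \<subseteq> {1..n}"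
    using assms(1) by (blast elim: monomial_spanE)
  obtain r where r: "H ^ N * y = evalL x r" "vars r \<subseteq> {1..n}"
    "\<And>m. m \<in> Poly_Mapping.keys r \<Longrightarrow> 0 \<le> Poly_Mapping.lookup m j"
    using assms(2) by (rule monomial_spanE) blast
  have vars_hN: "vars (h ^ N) \<subseteq> {1..n} - {j}"
    using vars_power[of h N] vars_h by blast
  have "evalL x (h ^ N * w) = evalL x (h ^ N) * evalL x w"
    by (rule evalL_mult) (use vars_hN w(2) x_nonzero in blast)
  also have "\<dots> = H ^ N * y"
    using vars_h x_nonzero w(1) by (subst evalL_power) auto
  finally have "evalL x (h ^ N * w) = H ^ N * y" .
  then have "evalL x (h ^ N * w - r) = 0"
    by (simp add: evalL_diff r(1))
  moreover have "vars (h ^ N * w - r) \<subseteq> {1..n}"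
    using vars_diff[of "h ^ N * w" r] vars_mult[of "h ^ N" w] vars_hN w(2) r(2) by blast
  ultimately have "h ^ N * w - r = 0"
    by (rule alg_indep_evalL_eq_0[OF alg_indep, rotated])
  then have "h ^ N * w = r"
    by simp
  moreover have "h ^ N \<noteq> 0"
    using H_nonzero by auto
  ultimately have "\<forall>m\<in>Poly_Mapping.keys w. 0 \<le> Poly_Mapping.lookup m j"
    using nonneg_exponent_cancel[of "h ^ N" j w] vars_hN r(3) by blast
  then show ?thesis
    unfolding w(1) using w(2) by (blast intro: evalL_in_monomial_span)
qed

lemma laurent_inter_subset_mixed: "laurent \<inter> laurent' \<subseteq> mixed"
proof
  fix y assume y: "y \<in> laurent \<inter> laurent'"
  then obtain q where q: "y = evalL (x(j := x')) q" "vars q \<subseteq> {1..n}"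
    by (blast elim: monomial_spanE)
  let ?neg = "\<lambda>m. Poly_Mapping.lookup m j < (0::int)"
  define q_neg where "q_neg = restrict_monomials ?neg q"
  define q_nonneg where "q_nonneg = restrict_monomials (\<lambda>m. \<not> ?neg m) q"
  have y_split: "y = evalL (x(j := x')) q_neg + evalL (x(j := x')) q_nonneg"
    unfolding q(1) q_neg_def q_nonneg_def by (simp add: restrict_monomials_split flip: evalL_add)
  have nonneg_part: "evalL (x(j := x')) q_nonneg \<in> mixed"
  proof (rule nonneg_exponents_in_mixed)
    show "vars q_nonneg \<subseteq> {1..n}"
      using vars_restrict_monomials[of _ q] q(2) unfolding q_nonneg_def by blast
    show "0 \<le> Poly_Mapping.lookup m j" if "m \<in> Poly_Mapping.keys q_nonneg" for m
      using that by (simp add: q_nonneg_def keys_restrict_monomials)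
  qed
  have "evalL (x(j := x')) q_neg = y - evalL (x(j := x')) q_nonneg"
    using y_split by simp
  also have "\<dots> \<in> laurent"
    using y nonneg_part mixed_subset_laurent by (blast intro: laurent.diff_in)
  finally have neg_part_in_laurent: "evalL (x(j := x')) q_neg \<in> laurent" .
  obtain N where "H ^ N * evalL (x(j := x')) q_neg \<in> polynomial_in_x_j"
  proof (rule nonpos_exponents_in_localization[THEN exE])
    show "vars q_neg \<subseteq> {1..n}"
      using vars_restrict_monomials[of ?neg q] q(2) unfolding q_neg_def by blast
    show "Poly_Mapping.lookup m j \<le> 0" if "m \<in> Poly_Mapping.keys q_neg" for m
      using that by (simp add: q_neg_def keys_restrict_monomials)
  qed
  then have "evalL (x(j := x')) q_neg \<in> mixed"
    using divide_out_H[OF neg_part_in_laurent] polynomial_in_x_j_subset_mixed by blast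
  with nonneg_part show "y \<in> mixed"
    unfolding y_split by (intro mixed.add_in)
qed

theorem mixed_eq_laurent_inter: "mixed = laurent \<inter> laurent'"
  using mixed_subset_laurent mixed_subset_laurent' laurent_inter_subset_mixed by blast

end

section \<open>Exchange polynomials of an LP seed\<close>

lemma keys_sum_single_subset:
  "Poly_Mapping.keys (\<Sum>k\<in>K. Poly_Mapping.single k (f k)) \<subseteq> K"
proof -
  have "Poly_Mapping.keys (\<Sum>k\<in>K. Poly_Mapping.single k (f k)) \<subseteq>
      (\<Union>k\<in>K. Poly_Mapping.keys (Poly_Mapping.single k (f k)))"
    by (rule keys_sum)
  also have "\<dots> \<subseteq> K"
    by auto
  finally show ?thesis .
qed

lemma vars_monoL: "vars (monoL e :: 'r::comm_ring_1 lpoly) \<subseteq> Poly_Mapping.keys e"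
  unfolding monoL_def by (rule vars_single)

lemma vars_hatF:
  fixes F :: "nat \<Rightarrow> 'r::comm_ring_1 mpoly"
  assumes "vars (F j) \<subseteq> {1..n} - {j}"
  shows "vars (hatF n F j) \<subseteq> {1..n} - {j}"
proof -
  let ?e = "\<Sum>k\<in>{1..n} - {j}. Poly_Mapping.single k (- int (expo n F j k))"
  have "vars (monoL ?e :: 'r lpoly) \<subseteq> {1..n} - {j}"
    using vars_monoL[of ?e] keys_sum_single_subset[of "\<lambda>k. - int (expo n F j k)" "{1..n} - {j}"]
    by blast
  moreover have "vars (toL (F j)) \<subseteq> {1..n} - {j}"
    using vars_toL[of "F j"] assms by blast
  ultimately show ?thesis
    unfolding hatF_def using vars_mult[of "toL (F j)" "monoL ?e"] by blast
qed

lemma evalL_hatF_nonzero: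
  fixes x :: "nat \<Rightarrow> 'r::idom ratfun"
  assumes indep: "alg_indep x n" and vars_F: "vars (F j) \<subseteq> {1..n} - {j}" and "F j \<noteq> 0"
  shows "evalL x (hatF n F j) \<noteq> 0"
proof -
  define e where "e = (\<Sum>k\<in>{1..n} - {j}. Poly_Mapping.single k (- int (expo n F j k)))"
  have x_nonzero: "\<And>i. i \<in> {1..n} \<Longrightarrow> x i \<noteq> 0"
    by (rule alg_indep_nonzero[OF indep])
  have keys_e: "Poly_Mapping.keys e \<subseteq> {1..n}"
    unfolding e_def using keys_sum_single_subset[of "\<lambda>k. - int (expo n F j k)" "{1..n} - {j}"] by blast
  have vars_factors: "vars (toL (F j)) \<union> vars (monoL e :: 'r lpoly) \<subseteq> {1..n}"
    using vars_toL[of "F j"] vars_monoL[of e] vars_F keys_e by blast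
  have "evalL x (hatF n F j) = evalL x (toL (F j)) * evalL x (monoL e)"
    unfolding hatF_def e_def[symmetric]
    by (rule evalL_mult) (use vars_factors x_nonzero in blast)
  also have "\<dots> = evalP x (F j) * evalMon x e"
    by (simp add: evalL_toL monoL_def evalL_single)
  also have "\<dots> \<noteq> 0"
  proof -
    have "evalP x (F j) \<noteq> 0"
      using indep vars_F \<open>F j \<noteq> 0\<close> unfolding alg_indep_def by blast
    moreover have "evalMon x e \<noteq> 0"
      by (rule evalMon_nonzero) (use keys_e x_nonzero in blast)
    ultimately show ?thesis
      by simp
  qed
  finally show ?thesis .
qed

lemma exchange_hatF:
  assumes "LP_seed n x F" "j \<in> {1..n}"
  shows "exchange n j x (hatF n F j)"
proof
  have vars_F: "vars (F j) \<subseteq> {1..n} - {j}" and "irreducible (F j)"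
    using assms unfolding LP_seed_def by blast+
  then have "F j \<noteq> 0"
    by (simp add: irreducible_def)
  show indep: "alg_indep x n"
    using assms(1) by (simp add: LP_seed_def transc_basis_def)
  show "vars (hatF n F j) \<subseteq> {1..n} - {j}"
    by (rule vars_hatF[of F j n, OF vars_F])
  show "evalL x (hatF n F j) \<noteq> 0"
    by (rule evalL_hatF_nonzero[of x n F j, OF indep vars_F \<open>F j \<noteq> 0\<close>])
qed (use assms(2) in simp)

lemma MixedRing_eq_LaurentRing_inter:
  assumes "LP_seed n x F" "j \<in> {1..n}"
  shows "MixedRing n x F j = LaurentRing x n \<inter> LaurentRing (x(j := xprime n x F j)) n"
proof -
  interpret exchange n j x "hatF n F j"
    by (rule exchange_hatF[OF assms])
  have "xprime n x F j = x'"
    by (simp add: xprime_def x'_def)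
  then show ?thesis
    using mixed_eq_laurent_inter by (simp add: MixedRing_def LaurentRing_def monomial_span_def)
qed

theorem lemma4p2:
  fixes n :: nat
    and x :: "nat \<Rightarrow> 'r::{factorial_semiring,idom,ring_char_0} ratfun"
    and F :: "nat \<Rightarrow> 'r mpoly"
  assumes "n \<ge> 1"
    and "LP_seed n x F"
  shows "upper_bound n x F = (\<Inter>j\<in>{1..n}. MixedRing n x F j)"
proof -
  have "(\<Inter>j\<in>{1..n}. MixedRing n x F j) =
      (\<Inter>j\<in>{1..n}. LaurentRing x n \<inter> LaurentRing (x(j := xprime n x F j)) n)"
    using MixedRing_eq_LaurentRing_inter[OF assms(2)] by simp
  also have "\<dots> = upper_bound n x F"
    using assms(1) unfolding upper_bound_def by auto
  finally show ?thesis ..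
qed

end
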